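(* Let $n$ be a positive integer and let $G$ be a finite simple graph which is gap-free and $n$-claw-free. Then $\operatorname{reg}(I(G))\leq n$. *)

theory Defs
  imports Main "HOL-Library.Poly_Mapping" "HOL-Library.Function_Algebras" "HOL-Library.Extended_Real"
begin

text \<open>A finite simple graph: vertex set = UNIV of a finite type 'v, edges given by a
symmetric irreflexive relation E.\<close>

definition simple_graph :: "('v \<Rightarrow> 'v \<Rightarrow> bool) \<Rightarrow> bool" where
  "simple_graph E \<longleftrightarrow> (\<forall>u v. E u v \<longrightarrow> E v u) \<and> (\<forall>v. \<not> E v v)"

text \<open>Gap-free: G has no induced subgraph 2K2, i.e. any two edges with four distinct
endpoints are joined by an edge.\<close>
definition gap_free :: "('v \<Rightarrow> 'v \<Rightarrow> bool) \<Rightarrow> bool" where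
  "gap_free E \<longleftrightarrow> (\<forall>a b c d. E a b \<and> E c d \<and> {a, b} \<inter> {c, d} = {} \<longrightarrow>
      E a c \<or> E a d \<or> E b c \<or> E b d)"

text \<open>n-claw-free: G has no induced subgraph isomorphic to the n-claw K_{1,n}, i.e. no
vertex has n pairwise non-adjacent neighbours.\<close>
definition claw_free :: "nat \<Rightarrow> ('v \<Rightarrow> 'v \<Rightarrow> bool) \<Rightarrow> bool" where
  "claw_free n E \<longleftrightarrow> \<not> (\<exists>v S. finite S \<and> card S = n \<and> (\<forall>s\<in>S. E v s) \<and>
      (\<forall>s\<in>S. \<forall>t\<in>S. \<not> E s t))"

type_synonym ('v, 'k) mpoly = "('v \<Rightarrow>\<^sub>0 nat) \<Rightarrow>\<^sub>0 'k"

definition Var :: "'v \<Rightarrow> ('v, 'k::comm_ring_1) mpoly" where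
  "Var v = Poly_Mapping.single (Poly_Mapping.single v 1) 1"

definition mon_deg :: "('v \<Rightarrow>\<^sub>0 nat) \<Rightarrow> nat" where
  "mon_deg m = (\<Sum>v\<in>Poly_Mapping.keys m. Poly_Mapping.lookup m v)"

text \<open>Homogeneous of (integer) degree d; the zero polynomial is homogeneous of every degree.\<close>
definition homogeneous :: "int \<Rightarrow> ('v, 'k::zero) mpoly \<Rightarrow> bool" where
  "homogeneous d p \<longleftrightarrow> (\<forall>m\<in>Poly_Mapping.keys p. int (mon_deg m) = d)"

text \<open>Edge ideal I(G) = (x_u x_v : uv edge); since the vertex set is finite this is the
set of all combinations of the generators with polynomial coefficients.\<close>
definition edge_ideal :: "('v::finite \<Rightarrow> 'v \<Rightarrow> bool) \<Rightarrow> ('v, 'k::comm_ring_1) mpoly set" where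
  "edge_ideal E = {p. \<exists>c. p = (\<Sum>e\<in>{(u, v). E u v}. c e * Var (fst e) * Var (snd e))}"

text \<open>beta_{i,j}(I) = dim_k Tor_i(I, k)_j, computed as the homology of I tensored with the
Koszul complex on the variables.  A chain of homological degree i is a function
c : 'v set => polynomial, with c S the coefficient of e_S (|S| = i).\<close>

definition vorder :: "'v::finite \<Rightarrow> nat" where
  "vorder = (SOME f. inj f)"

definition ksign :: "'v::finite \<Rightarrow> 'v set \<Rightarrow> 'k::comm_ring_1" where
  "ksign s S = (- 1) ^ card {t\<in>S. vorder t < vorder s}"

text \<open>Koszul differential d(f e_S) = sum over s in S of sign * x_s f e_{S - s}.\<close>
definition koszul_d :: "('v::finite set \<Rightarrow> ('v, 'k::comm_ring_1) mpoly) \<Rightarrow> ('v set \<Rightarrow> ('v, 'k) mpoly)" where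
  "koszul_d c = (\<lambda>T. \<Sum>s\<in>UNIV - T. Poly_Mapping.single 0 (ksign s (insert s T)) * Var s * c (insert s T))"

text \<open>Degree-j part of the i-th chain module of I (x) K(x): elements f e_S with |S| = i,
f in I homogeneous of degree j - i.\<close>
definition koszul_chains :: "('v::finite, 'k::comm_ring_1) mpoly set \<Rightarrow> nat \<Rightarrow> int \<Rightarrow> ('v set \<Rightarrow> ('v, 'k) mpoly) set" where
  "koszul_chains I i j = {c. \<forall>S. c S \<noteq> 0 \<longrightarrow> card S = i \<and> c S \<in> I \<and> homogeneous (j - int i) (c S)}"

definition kscale :: "'k::field \<Rightarrow> ('v set \<Rightarrow> ('v, 'k) mpoly) \<Rightarrow> ('v set \<Rightarrow> ('v, 'k) mpoly)" where
  "kscale a c = (\<lambda>S. Poly_Mapping.map ((*) a) (c S))"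

definition kdim :: "('v set \<Rightarrow> ('v, 'k::field) mpoly) set \<Rightarrow> nat" where
  "kdim = vector_space.dim kscale"

definition graded_betti :: "('v::finite, 'k::field) mpoly set \<Rightarrow> nat \<Rightarrow> int \<Rightarrow> nat" where
  "graded_betti I i j =
     kdim {c \<in> koszul_chains I i j. koszul_d c = (\<lambda>_. 0)} - kdim (koszul_d ` koszul_chains I (Suc i) j)"

text \<open>Castelnuovo-Mumford regularity reg(I) = max{ j - i : beta_{i,j}(I) \<noteq> 0 }
(= -infinity for the zero ideal).\<close>
definition cm_reg :: "('v::finite, 'k::field) mpoly set \<Rightarrow> ereal" where
  "cm_reg I = Sup {ereal (of_int (j - int i)) | i j. graded_betti I i j \<noteq> 0}"

end

theory Submission
  imports Defs
begin

text \<open>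
  The graded Betti numbers of I(G) are the homology of the Koszul complex I(G) \<otimes> K, which
  splits into strands indexed by multidegrees \<alpha>; it suffices to show that the strand of
  multidegree \<alpha> is exact in homological degree i whenever |\<alpha>| > i + n.  If x_v^2 divides
  x^\<alpha>, multiplication by e_v is a contracting homotopy of the strand.  If \<alpha> is squarefree
  with support W, complementation in W identifies the strand with the relative cochain
  complex of the full simplex on W modulo the independence complex of G[W].  The full simplex
  is a cone, so everything reduces to showing that on the independence complex of an
  n-claw-free gap-free graph every cocycle on faces of size k \<ge> n is a coboundary.  This goes
  by induction on n and |W| through the deletion and the link of a vertex x of maximal
  degree: the link is the independence complex of W minus the closed neighbourhood of x, and
  gap-freeness makes that graph (n-1)-claw-free.
\<close>

section \<open>Koszul signs\<close>

lemma inj_vorder: "inj (vorder :: 'v::finite \<Rightarrow> nat)"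
proof -
  have "\<exists>f :: 'v \<Rightarrow> nat. inj f"
    using finite_imp_inj_to_nat_seg[OF finite_UNIV] by metis
  then show ?thesis unfolding vorder_def by (rule someI_ex)
qed

lemma vorder_less_or_greater:
  "(a::'v::finite) \<noteq> b \<Longrightarrow> vorder a < vorder b \<or> vorder b < vorder a"
  using inj_vorder by (metis injD linorder_neqE_nat)

lemma ksign_square [simp]: "ksign s S * ksign s S = (1::'k::comm_ring_1)"
  unfolding ksign_def by (simp flip: power_mult_distrib)

lemma ksign_Diff_singleton:
  fixes X :: "'v::finite set"
  assumes "a \<in> X"
  shows "ksign b (X - {a}) = (if vorder a < vorder b then - ksign b X else (ksign b X :: 'k::comm_ring_1))"
proof (cases "vorder a < vorder b")
  case True
  have "{t \<in> X - {a}. vorder t < vorder b} = {t \<in> X. vorder t < vorder b} - {a}" by auto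
  moreover have "a \<in> {t \<in> X. vorder t < vorder b}" using assms True by simp
  ultimately have "card {t \<in> X. vorder t < vorder b} = Suc (card {t \<in> X - {a}. vorder t < vorder b})"
    by (metis card_Suc_Diff1 finite)
  then show ?thesis using True by (simp add: ksign_def)
next
  case False
  then have "{t \<in> X - {a}. vorder t < vorder b} = {t \<in> X. vorder t < vorder b}" by auto
  then show ?thesis using False by (simp add: ksign_def)
qed

lemma ksign_swap:
  fixes X :: "'v::finite set"
  assumes "a \<in> X" "b \<in> X" "a \<noteq> b"
  shows "ksign a X * ksign b (X - {a}) = - (ksign b X * (ksign a (X - {b}) :: 'k::comm_ring_1))"
  using vorder_less_or_greater[OF assms(3)] assms by (auto simp: ksign_Diff_singleton mult.commute)

lemma ksign_swap_Diff:
  fixes X :: "'v::finite set"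
  assumes "a \<in> X" "b \<in> X" "a \<noteq> b"
  shows "ksign a X * ksign b X = - (ksign b (X - {a}) * (ksign a (X - {b}) :: 'k::comm_ring_1))"
  using vorder_less_or_greater[OF assms(3)] assms by (auto simp: ksign_Diff_singleton mult.commute)

section \<open>Cochains on subsets of the vertex type\<close>

text \<open>A function on vertex sets is a chain or a cochain with the coefficient of a face as its
  value.  The coboundary is the simplicial one, and the boundary is the Koszul differential
  with scalar coefficients, i.e. koszul_d in a fixed multidegree (see lookup_koszul_d).\<close>

definition coboundary :: "('v::finite set \<Rightarrow> 'k::comm_ring_1) \<Rightarrow> 'v set \<Rightarrow> 'k" where
  "coboundary a F = (\<Sum>s\<in>F. ksign s F * a (F - {s}))"

definition boundary :: "('v::finite set \<Rightarrow> 'k::comm_ring_1) \<Rightarrow> 'v set \<Rightarrow> 'k" where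
  "boundary g T = (\<Sum>s\<in>UNIV - T. ksign s (insert s T) * g (insert s T))"

text \<open>The chain homotopies of a cone with apex v.\<close>

definition contract :: "'v::finite \<Rightarrow> ('v set \<Rightarrow> 'k::comm_ring_1) \<Rightarrow> 'v set \<Rightarrow> 'k" where
  "contract v b G = (if v \<in> G then 0 else ksign v (insert v G) * b (insert v G))"

definition join :: "'v::finite \<Rightarrow> ('v set \<Rightarrow> 'k::comm_ring_1) \<Rightarrow> 'v set \<Rightarrow> 'k" where
  "join v a G = (if v \<in> G then ksign v G * a (G - {v}) else 0)"

lemma coboundary_diff: "coboundary (\<lambda>G. f G - g G) F = coboundary f F - coboundary g F"
  unfolding coboundary_def by (simp add: right_diff_distrib sum_subtractf)

lemma coboundary_add: "coboundary (\<lambda>G. f G + g G) F = coboundary f F + coboundary g F"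
  unfolding coboundary_def by (simp add: distrib_left sum.distrib)

lemma coboundary_uminus: "coboundary (\<lambda>G. - f G) F = - coboundary f F"
  unfolding coboundary_def by (simp add: sum_negf)

lemma coboundary_cong:
  "(\<And>s. s \<in> F \<Longrightarrow> a (F - {s}) = a' (F - {s})) \<Longrightarrow> coboundary a F = coboundary a' F"
  unfolding coboundary_def by simp

lemma coboundary_eq_0_if_card:
  assumes "{G. a G \<noteq> 0} \<subseteq> {G. card G = k}" "card F \<noteq> Suc k"
  shows "coboundary a F = 0"
proof -
  have "a (F - {s}) = 0" if "s \<in> F" for s
  proof -
    have "0 < card F" using that by (auto simp: card_gt_0_iff)
    then have "card (F - {s}) \<noteq> k" using that assms(2) by (simp add: card_Diff_singleton)
    then show ?thesis using assms(1) by blast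
  qed
  then show ?thesis by (simp add: coboundary_def)
qed

text \<open>Proved by pairing terms: concluding from S = -S would fail in characteristic 2.\<close>

lemma sum_antisym_eq_0:
  fixes f :: "'a \<Rightarrow> 'a \<Rightarrow> 'k::comm_ring_1"
  assumes "finite A" "\<And>s t. s \<in> A \<Longrightarrow> t \<in> A \<Longrightarrow> s \<noteq> t \<Longrightarrow> f s t = - f t s"
  shows "(\<Sum>s\<in>A. \<Sum>t\<in>A - {s}. f s t) = 0"
  using assms
proof (induction A rule: finite_induct)
  case empty
  then show ?case by simp
next
  case (insert a A)
  have "(\<Sum>s\<in>A. \<Sum>t\<in>insert a A - {s}. f s t) = (\<Sum>s\<in>A. f s a + (\<Sum>t\<in>A - {s}. f s t))"
  proof (rule sum.cong[OF refl])
    fix s assume "s \<in> A"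
    then have "insert a A - {s} = insert a (A - {s})" "a \<notin> A - {s}" using insert.hyps by auto
    then show "(\<Sum>t\<in>insert a A - {s}. f s t) = f s a + (\<Sum>t\<in>A - {s}. f s t)"
      using insert.hyps by simp
  qed
  moreover have "(\<Sum>s\<in>A. \<Sum>t\<in>A - {s}. f s t) = 0"
    using insert.IH insert.prems by blast
  ultimately have "(\<Sum>s\<in>insert a A. \<Sum>t\<in>insert a A - {s}. f s t) = (\<Sum>t\<in>A. f a t + f t a)"
    using insert.hyps by (simp add: sum.distrib)
  also have "\<dots> = 0"
  proof (rule sum.neutral, rule ballI)
    fix t assume "t \<in> A"
    then have "f a t = - f t a" using insert.hyps insert.prems by blast
    then show "f a t + f t a = 0" by simp
  qed
  finally show ?case .
qed

lemma coboundary_coboundary [simp]: "coboundary (coboundary a) F = (0::'k::comm_ring_1)"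
proof -
  have "coboundary (coboundary a) F =
      (\<Sum>s\<in>F. \<Sum>t\<in>F - {s}. ksign s F * ksign t (F - {s}) * a (F - {s} - {t}))"
    unfolding coboundary_def by (simp add: sum_distrib_left mult.assoc)
  also have "\<dots> = 0"
  proof (rule sum_antisym_eq_0)
    fix s t assume "s \<in> F" "t \<in> F" "s \<noteq> t"
    then have "ksign s F * ksign t (F - {s}) = - (ksign t F * (ksign s (F - {t}) :: 'k))"
      by (rule ksign_swap)
    moreover have "F - {s} - {t} = F - {t} - {s}" by blast
    ultimately show "ksign s F * ksign t (F - {s}) * a (F - {s} - {t}) =
        - (ksign t F * ksign s (F - {t}) * a (F - {t} - {s}))"
      by simp
  qed simp
  finally show ?thesis .
qed

lemma boundary_boundary [simp]: "boundary (boundary g) T = (0::'k::comm_ring_1)"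
proof -
  have "boundary (boundary g) T = (\<Sum>s\<in>- T. \<Sum>t\<in>- T - {s}.
      ksign s (insert s T) * ksign t (insert t (insert s T)) * g (insert t (insert s T)))"
    unfolding boundary_def sum_distrib_left
    by (intro sum.cong) (auto simp: mult.assoc Compl_eq_Diff_UNIV Diff_insert[symmetric])
  also have "\<dots> = 0"
  proof (rule sum_antisym_eq_0)
    fix s t assume st: "s \<in> - T" "t \<in> - T" "s \<noteq> t"
    define X where "X = insert t (insert s T)"
    have X: "X - {t} = insert s T" "X - {s} = insert t T" "insert s (insert t T) = X"
      using st by (auto simp: X_def)
    have "ksign s (insert s T) * ksign t X = - (ksign t (insert t T) * (ksign s X :: 'k))"
      using ksign_swap[of t X s] st X by (simp add: X_def mult.commute)
    then show "ksign s (insert s T) * ksign t X * g X =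
        - (ksign t (insert t T) * ksign s (insert s (insert t T)) * g (insert s (insert t T)))"
      using X by simp
  qed simp
  finally show ?thesis .
qed

lemma join_contract: "join v (contract v b) F = (if v \<in> F then b F else (0::'k::comm_ring_1))"
  by (simp add: join_def contract_def insert_absorb mult.assoc[symmetric])

lemma coboundary_join:
  fixes a :: "'v::finite set \<Rightarrow> 'k::comm_ring_1"
  shows "coboundary (join v a) F = - join v (coboundary a) F"
proof (cases "v \<in> F")
  case True
  have "coboundary (join v a) F = (\<Sum>s\<in>F - {v}. ksign s F * join v a (F - {s}))"
    unfolding coboundary_def using True by (simp add: sum.remove join_def)
  also have "\<dots> = (\<Sum>s\<in>F - {v}. - (ksign v F * (ksign s (F - {v}) * a (F - {v} - {s}))))"
  proof (intro sum.cong refl)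
    fix s assume s: "s \<in> F - {v}"
    then have vs: "v \<noteq> s" by blast
    from s have "ksign s F * ksign v (F - {s}) = - (ksign v F * (ksign s (F - {v}) :: 'k))"
      using True by (intro ksign_swap) auto
    moreover have "F - {s} - {v} = F - {v} - {s}" by blast
    ultimately show "ksign s F * join v a (F - {s}) = - (ksign v F * (ksign s (F - {v}) * a (F - {v} - {s})))"
      using s vs True by (simp add: join_def mult.assoc[symmetric])
  qed
  also have "\<dots> = - join v (coboundary a) F"
    using True by (simp add: join_def coboundary_def sum_distrib_left sum_negf)
  finally show ?thesis .
next
  case False
  then show ?thesis by (simp add: coboundary_def join_def)
qed

lemma coboundary_contract:
  fixes b :: "'v::finite set \<Rightarrow> 'k::comm_ring_1"
  shows "coboundary (contract v b) F + contract v (coboundary b) F = b F"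
proof (cases "v \<in> F")
  case True
  have "coboundary (contract v b) F =
      ksign v F * contract v b (F - {v}) + (\<Sum>s\<in>F - {v}. ksign s F * contract v b (F - {s}))"
    unfolding coboundary_def using True by (simp add: sum.remove)
  moreover have "(\<Sum>s\<in>F - {v}. ksign s F * contract v b (F - {s})) = 0"
    using True by (intro sum.neutral) (auto simp: contract_def)
  moreover have "contract v b (F - {v}) = ksign v F * b F"
    using True by (simp add: contract_def insert_absorb)
  moreover have "contract v (coboundary b) F = 0"
    using True by (simp add: contract_def)
  ultimately show ?thesis by (simp add: mult.assoc[symmetric])
next
  case False
  define X where "X = insert v F"
  have "coboundary (contract v b) F = - (ksign v X * (\<Sum>s\<in>F. ksign s X * b (X - {s})))"
    unfolding coboundary_def sum_distrib_left sum_negf[symmetric]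
  proof (intro sum.cong refl)
    fix s assume "s \<in> F"
    then have "ksign v X * ksign s X = - (ksign s (X - {v}) * ksign v (X - {s}) :: 'k)"
      using False by (intro ksign_swap_Diff) (auto simp: X_def)
    moreover have "insert v (F - {s}) = X - {s}" "X - {v} = F" "v \<notin> F - {s}"
      using False \<open>s \<in> F\<close> by (auto simp: X_def)
    ultimately show "ksign s F * contract v b (F - {s}) = - (ksign v X * (ksign s X * b (X - {s})))"
      using False by (simp add: contract_def mult.assoc[symmetric])
  qed
  moreover have "contract v (coboundary b) F = b F + ksign v X * (\<Sum>s\<in>F. ksign s X * b (X - {s}))"
    using False by (simp add: contract_def coboundary_def X_def distrib_left mult.assoc[symmetric])
  ultimately show ?thesis by simp
qed

lemma boundary_join:
  fixes g :: "'v::finite set \<Rightarrow> 'k::comm_ring_1"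
  shows "boundary (join v g) T + join v (boundary g) T = g T"
proof (cases "v \<in> T")
  case True
  define T' where "T' = T - {v}"
  have "boundary (join v g) T = - (ksign v T * (\<Sum>s\<in>- T. ksign s (insert s T') * g (insert s T')))"
    unfolding boundary_def sum_distrib_left sum_negf[symmetric] Compl_eq_Diff_UNIV
  proof (intro sum.cong refl)
    fix s assume "s \<in> UNIV - T"
    then have "insert s T - {v} = insert s T'" "insert s T - {s} = T" "v \<noteq> s"
      using True by (auto simp: T'_def)
    moreover have "ksign s (insert s T) * ksign v (insert s T) = - (ksign v T * (ksign s (insert s T') :: 'k))"
      using ksign_swap_Diff[of s "insert s T" v] True calculation by simp
    ultimately show "ksign s (insert s T) * join v g (insert s T) =
        - (ksign v T * (ksign s (insert s T') * g (insert s T')))"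
      using True by (simp add: join_def mult.assoc[symmetric] del: mult_minus_left) simp
  qed
  moreover have "UNIV - T' = insert v (- T)" "v \<notin> - T" "insert v T' = T"
    using True by (auto simp: T'_def)
  then have "join v (boundary g) T = g T + ksign v T * (\<Sum>s\<in>- T. ksign s (insert s T') * g (insert s T'))"
    using True by (simp add: join_def boundary_def distrib_left mult.assoc[symmetric] flip: T'_def)
  ultimately show ?thesis by simp
next
  case False
  have "boundary (join v g) T = ksign v (insert v T) * join v g (insert v T) +
      (\<Sum>s\<in>UNIV - T - {v}. ksign s (insert s T) * join v g (insert s T))"
    unfolding boundary_def using False by (simp add: sum.remove)
  moreover have "(\<Sum>s\<in>UNIV - T - {v}. ksign s (insert s T) * join v g (insert s T)) = 0"
    using False by (intro sum.neutral) (auto simp: join_def)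
  ultimately have "boundary (join v g) T = ksign v (insert v T) * join v g (insert v T)"
    by simp
  then show ?thesis using False by (simp add: join_def mult.assoc[symmetric])
qed

definition is_cocycle_on :: "'v::finite set set \<Rightarrow> nat \<Rightarrow> ('v set \<Rightarrow> 'k::comm_ring_1) \<Rightarrow> bool" where
  "is_cocycle_on K k b \<longleftrightarrow> (\<forall>F\<in>K. card F = Suc k \<longrightarrow> coboundary b F = 0)"

definition is_coboundary_on :: "'v::finite set set \<Rightarrow> nat \<Rightarrow> ('v set \<Rightarrow> 'k::comm_ring_1) \<Rightarrow> bool" where
  "is_coboundary_on K k b \<longleftrightarrow> (\<exists>a. \<forall>F\<in>K. card F = k \<longrightarrow> b F = coboundary a F)"

lemma is_cocycle_on_subset: "K' \<subseteq> K \<Longrightarrow> is_cocycle_on K k b \<Longrightarrow> is_cocycle_on K' k b"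
  unfolding is_cocycle_on_def by blast

lemma is_coboundary_on_cone:
  assumes cone: "\<And>F. F \<in> K \<Longrightarrow> insert v F \<in> K" and "is_cocycle_on K k b"
  shows "is_coboundary_on K k b"
  unfolding is_coboundary_on_def
proof (intro exI ballI impI)
  fix F assume "F \<in> K" "card F = k"
  then have "contract v (coboundary b) F = 0"
    using assms by (auto simp: contract_def is_cocycle_on_def)
  then show "b F = coboundary (contract v b) F"
    using coboundary_contract[of v b F] by simp
qed

lemma is_coboundary_on_Pow:
  assumes "1 \<le> k" "is_cocycle_on (Pow W) k b"
  shows "is_coboundary_on (Pow W) k b"
proof (cases "W = {}")
  case True
  then show ?thesis using assms(1) by (auto simp: is_coboundary_on_def)
next
  case False
  then obtain w where "w \<in> W" by blast
  then show ?thesis using assms(2) by (intro is_coboundary_on_cone[of _ w]) auto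
qed

lemma is_coboundary_on_link:
  fixes b :: "'v::finite set \<Rightarrow> 'k::comm_ring_1"
  assumes cocycle: "is_cocycle_on K k b"
    and deletion: "\<And>F. F \<in> K \<Longrightarrow> x \<notin> F \<Longrightarrow> card F = k \<Longrightarrow> b F = 0"
    and link: "\<And>c. is_cocycle_on L (k - 1) c \<Longrightarrow> is_coboundary_on L (k - 1) (c :: 'v set \<Rightarrow> 'k)"
    and L: "L = {H. x \<notin> H \<and> insert x H \<in> K}"
    and down: "\<And>F. insert x F \<in> K \<Longrightarrow> F \<in> K"
    and "1 \<le> k"
  shows "is_coboundary_on K k b"
proof -
  have "is_cocycle_on L (k - 1) (contract x b)"
    unfolding is_cocycle_on_def
  proof (intro ballI impI)
    fix H assume "H \<in> L" "card H = Suc (k - 1)"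
    then have "x \<notin> H" "insert x H \<in> K" "H \<in> K" "card H = k"
      using L down \<open>1 \<le> k\<close> by auto
    then have "b H = 0" "contract x (coboundary b) H = 0"
      using cocycle by (simp_all add: deletion contract_def is_cocycle_on_def)
    then show "coboundary (contract x b) H = 0"
      using coboundary_contract[of x b H] by simp
  qed
  then obtain a where a: "\<And>H. H \<in> L \<Longrightarrow> card H = k - 1 \<Longrightarrow> contract x b H = coboundary a H"
    using link unfolding is_coboundary_on_def by blast
  have "b F = join x (coboundary a) F" if F: "F \<in> K" "card F = k" for F
  proof (cases "x \<in> F")
    case True
    then have "F - {x} \<in> L" "card (F - {x}) = k - 1"
      using F L by (simp_all add: insert_absorb)
    then have "contract x b (F - {x}) = coboundary a (F - {x})"
      by (rule a)
    moreover have "b F = join x (contract x b) F"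
      using join_contract[of x b F] True by simp
    ultimately show ?thesis
      using True by (simp add: join_def)
  qed (simp add: join_def deletion F)
  then have "b F = coboundary (\<lambda>G. - join x a G) F" if "F \<in> K" "card F = k" for F
    using that by (simp add: coboundary_uminus coboundary_join)
  then show ?thesis unfolding is_coboundary_on_def by blast
qed

lemma is_coboundary_on_deletion_link:
  fixes b :: "'v::finite set \<Rightarrow> 'k::comm_ring_1"
  assumes cocycle: "is_cocycle_on K k b"
    and deletion: "is_coboundary_on {F \<in> K. x \<notin> F} k b"
    and link: "\<And>c. is_cocycle_on L (k - 1) c \<Longrightarrow> is_coboundary_on L (k - 1) (c :: 'v set \<Rightarrow> 'k)"
    and L: "L = {H. x \<notin> H \<and> insert x H \<in> K}"
    and down: "\<And>F. insert x F \<in> K \<Longrightarrow> F \<in> K"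
    and "1 \<le> k"
  shows "is_coboundary_on K k b"
proof -
  obtain a where a: "\<And>F. F \<in> K \<Longrightarrow> x \<notin> F \<Longrightarrow> card F = k \<Longrightarrow> b F = coboundary a F"
    using deletion unfolding is_coboundary_on_def by auto
  have "is_cocycle_on K k (\<lambda>F. b F - coboundary a F)"
    using cocycle by (simp add: coboundary_diff is_cocycle_on_def)
  then have "is_coboundary_on K k (\<lambda>F. b F - coboundary a F)"
    using a link L down \<open>1 \<le> k\<close> by (intro is_coboundary_on_link[of K k _ x L]) auto
  then obtain a' where "\<And>F. F \<in> K \<Longrightarrow> card F = k \<Longrightarrow> b F - coboundary a F = coboundary a' F"
    unfolding is_coboundary_on_def by blast
  then have "b F = coboundary (\<lambda>G. a G + a' G) F" if "F \<in> K" "card F = k" for F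
    using that by (simp add: coboundary_add algebra_simps)
  then show ?thesis unfolding is_coboundary_on_def by blast
qed

section \<open>Independence complexes of gap-free claw-free graphs\<close>

definition indep :: "('v \<Rightarrow> 'v \<Rightarrow> bool) \<Rightarrow> 'v set \<Rightarrow> bool" where
  "indep E F \<longleftrightarrow> (\<forall>u\<in>F. \<forall>v\<in>F. \<not> E u v)"

definition ind_complex :: "('v \<Rightarrow> 'v \<Rightarrow> bool) \<Rightarrow> 'v set \<Rightarrow> 'v set set" where
  "ind_complex E W = {F. F \<subseteq> W \<and> indep E F}"

definition claw_free_on :: "nat \<Rightarrow> ('v \<Rightarrow> 'v \<Rightarrow> bool) \<Rightarrow> 'v set \<Rightarrow> bool" where
  "claw_free_on n E W \<longleftrightarrow> \<not> (\<exists>v\<in>W. \<exists>S\<subseteq>W. card S = n \<and> (\<forall>s\<in>S. E v s) \<and> indep E S)"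

lemma claw_free_on_subset: "W' \<subseteq> W \<Longrightarrow> claw_free_on n E W \<Longrightarrow> claw_free_on n E W'"
  unfolding claw_free_on_def by blast

lemma claw_free_imp_claw_free_on:
  fixes E :: "'v::finite \<Rightarrow> 'v \<Rightarrow> bool"
  assumes "claw_free n E"
  shows "claw_free_on n E W"
proof -
  have "\<not> (finite S \<and> card S = n \<and> (\<forall>s\<in>S. E v s) \<and> (\<forall>s\<in>S. \<forall>t\<in>S. \<not> E s t))" for v S
    using assms unfolding claw_free_def by blast
  then show ?thesis unfolding claw_free_on_def indep_def by auto
qed

lemma edge_not_claw_free_on_1:
  assumes "simple_graph E" "x \<in> W" "w \<in> W" "E x w"
  shows "\<not> claw_free_on 1 E W"
proof -
  have "card {w} = 1" "indep E {w}"
    using assms(1) by (auto simp: indep_def simple_graph_def)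
  then show ?thesis using assms(2-4) unfolding claw_free_on_def by blast
qed

lemma ind_complex_deletion: "{F \<in> ind_complex E W. x \<notin> F} = ind_complex E (W - {x})"
  unfolding ind_complex_def by blast

lemma ind_complex_link:
  assumes "simple_graph E" "x \<in> W"
  shows "{H. x \<notin> H \<and> insert x H \<in> ind_complex E W} = ind_complex E (W - {x} - {z. E x z})"
proof -
  have "\<And>u v. E u v \<Longrightarrow> E v u" "\<And>u. \<not> E u u"
    using assms(1) unfolding simple_graph_def by auto
  then show ?thesis
    using assms(2) unfolding ind_complex_def indep_def by blast
qed

text \<open>A claw of size m centred at y outside N[x] forces, by gap-freeness, every neighbour u of
  x outside N(y) to see the whole claw, so that u, x and the claw form a claw of size m + 1.
  Hence N(x) \<subseteq> N(y), with equality by maximality of deg x, which is absurd.\<close>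
lemma claw_free_on_Diff_closed_nbhd:
  fixes E :: "'v::finite \<Rightarrow> 'v \<Rightarrow> bool"
  assumes sg: "simple_graph E" and gf: "gap_free E" and cf: "claw_free_on (Suc m) E W"
    and "1 \<le> m" and x: "x \<in> W"
    and max: "\<And>y. y \<in> W \<Longrightarrow> card {z\<in>W. E y z} \<le> card {z\<in>W. E x z}"
  shows "claw_free_on m E (W - {x} - {z. E x z})"
proof (rule ccontr)
  assume "\<not> claw_free_on m E (W - {x} - {z. E x z})"
  then obtain y Z where y: "y \<in> W - {x} - {z. E x z}" and Z: "Z \<subseteq> W - {x} - {z. E x z}"
    "card Z = m" "\<forall>s\<in>Z. E y s" "indep E Z"
    unfolding claw_free_on_def by blast
  have sym: "\<And>a b. E a b \<Longrightarrow> E b a" and irr: "\<And>a. \<not> E a a"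
    using sg unfolding simple_graph_def by auto
  have sub: "{z\<in>W. E x z} \<subseteq> {z\<in>W. E y z}"
  proof (rule subsetI, rule ccontr)
    fix u assume u: "u \<in> {z\<in>W. E x z}" "u \<notin> {z\<in>W. E y z}"
    have "E u z" if "z \<in> Z" for z
    proof -
      have "{x, u} \<inter> {y, z} = {}" using y Z that u irr by auto
      then have "E x y \<or> E x z \<or> E u y \<or> E u z"
        using gf u y Z that unfolding gap_free_def by (metis (mono_tags, lifting) mem_Collect_eq)
      moreover have "\<not> E x y" "\<not> E x z" "\<not> E u y"
        using y Z that u sym by blast+
      ultimately show "E u z" by blast
    qed
    moreover have "x \<notin> Z" using Z by auto
    moreover have "indep E (insert x Z)"
      using Z sym irr unfolding indep_def by blast
    ultimately have "card (insert x Z) = Suc m" "insert x Z \<subseteq> W" "\<forall>s\<in>insert x Z. E u s"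
        "indep E (insert x Z)"
      using Z x u sym by auto
    then show False using cf u unfolding claw_free_on_def by blast
  qed
  then have "{z\<in>W. E x z} = {z\<in>W. E y z}"
    using card_mono[OF _ sub] max[of y] y by (intro card_subset_eq) auto
  moreover obtain z where "z \<in> Z"
    using Z \<open>1 \<le> m\<close> by (metis card.empty ex_in_conv not_one_le_zero)
  ultimately show False using Z by auto
qed

lemma obtain_max_degree_vertex:
  fixes W :: "'v::finite set"
  assumes "u \<in> W" "v \<in> W" "E u v"
  obtains x w where "x \<in> W" "w \<in> W" "E x w"
    "\<And>y. y \<in> W \<Longrightarrow> card {z\<in>W. E y z} \<le> card {z\<in>W. E x z}"
proof -
  define deg where "deg y = card {z\<in>W. E y z}" for y
  have fin: "finite (deg ` W)" "deg ` W \<noteq> {}" using assms(1) by auto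
  obtain x where x: "x \<in> W" "deg x = Max (deg ` W)"
    using Max_in[OF fin] by auto
  have max: "deg y \<le> deg x" if "y \<in> W" for y
    unfolding x(2) using fin that by (intro Max_ge) auto
  have "0 < deg u" using assms by (auto simp: deg_def card_gt_0_iff)
  then have "0 < deg x" using max assms(1) by (meson order_less_le_trans)
  then obtain w where "w \<in> W" "E x w" by (auto simp: deg_def card_gt_0_iff)
  with x(1) max show ?thesis unfolding deg_def by (intro that)
qed

lemma is_coboundary_on_ind_complex:
  fixes E :: "'v::finite \<Rightarrow> 'v \<Rightarrow> bool" and b :: "'v set \<Rightarrow> 'k::comm_ring_1"
  assumes sg: "simple_graph E" and gf: "gap_free E"
  shows "claw_free_on n E W \<Longrightarrow> 1 \<le> n \<Longrightarrow> n \<le> k \<Longrightarrow> is_cocycle_on (ind_complex E W) k b \<Longrightarrow>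
    is_coboundary_on (ind_complex E W) k b"
proof (induction n arbitrary: W k b)
  case 0
  then show ?case by simp
next
  case (Suc m)
  from Suc.prems show ?case
  proof (induction "card W" arbitrary: W b rule: less_induct)
    case less
    show ?case
    proof (cases "\<exists>u\<in>W. \<exists>v\<in>W. E u v")
      case False
      then have "ind_complex E W = Pow W"
        unfolding ind_complex_def indep_def by blast
      then show ?thesis
        using less.prems(3,4) is_coboundary_on_Pow[of k W b] by simp
    next
      case True
      then obtain u v where "u \<in> W" "v \<in> W" "E u v" by blast
      then obtain x w where x: "x \<in> W" "w \<in> W" "E x w"
        and max: "\<And>y. y \<in> W \<Longrightarrow> card {z\<in>W. E y z} \<le> card {z\<in>W. E x z}"
        by (rule obtain_max_degree_vertex) blast
      have "1 \<le> m"
        using edge_not_claw_free_on_1[OF sg x(1-3)] less.prems(1) by (cases m) auto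
      show ?thesis
      proof (rule is_coboundary_on_deletion_link)
        show "is_cocycle_on (ind_complex E W) k b" by (fact less.prems)
        have "card (W - {x}) < card W" using x(1) by (rule card_Diff1_less[OF finite])
        moreover have "claw_free_on (Suc m) E (W - {x})"
          using less.prems(1) by (rule claw_free_on_subset[rotated]) blast
        moreover have "is_cocycle_on (ind_complex E (W - {x})) k b"
          using less.prems(4) by (rule is_cocycle_on_subset[rotated]) (auto simp: ind_complex_def)
        ultimately show "is_coboundary_on {F \<in> ind_complex E W. x \<notin> F} k b"
          unfolding ind_complex_deletion using less.prems(2,3) by (intro less.hyps)
        show "is_coboundary_on (ind_complex E (W - {x} - {z. E x z})) (k - 1) c"
          if "is_cocycle_on (ind_complex E (W - {x} - {z. E x z})) (k - 1) c" for c :: "'v set \<Rightarrow> 'k"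
          using Suc.IH[OF claw_free_on_Diff_closed_nbhd[OF sg gf less.prems(1) \<open>1 \<le> m\<close> x(1) max]]
            \<open>1 \<le> m\<close> less.prems(3) that by simp
        show "ind_complex E (W - {x} - {z. E x z}) = {H. x \<notin> H \<and> insert x H \<in> ind_complex E W}"
          using ind_complex_link[OF sg x(1)] by simp
        show "F \<in> ind_complex E W" if "insert x F \<in> ind_complex E W" for F
          using that by (auto simp: ind_complex_def indep_def)
        show "1 \<le> k" using less.prems(3) by simp
      qed
    qed
  qed
qed

text \<open>The cohomology of the full simplex on W relative to the independence complex of G[W]
  vanishes in degrees f > n.\<close>

lemma relative_cocycle_is_coboundary:
  fixes E :: "'v::finite \<Rightarrow> 'v \<Rightarrow> bool" and a :: "'v set \<Rightarrow> 'k::comm_ring_1"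
  assumes sg: "simple_graph E" and gf: "gap_free E" and "1 \<le> n" and cf: "claw_free_on n E W"
    and supp: "{F. a F \<noteq> 0} \<subseteq> {F. F \<subseteq> W \<and> card F = f \<and> \<not> indep E F}"
    and cocycle: "\<And>F. F \<subseteq> W \<Longrightarrow> coboundary a F = 0"
    and "n + 1 \<le> f"
  shows "\<exists>a'. {F. a' F \<noteq> 0} \<subseteq> {F. F \<subseteq> W \<and> card F = f - 1 \<and> \<not> indep E F} \<and>
    (\<forall>F. F \<subseteq> W \<longrightarrow> coboundary a' F = a F)"
proof -
  have "is_coboundary_on (Pow W) f a"
    using cocycle \<open>n + 1 \<le> f\<close> by (intro is_coboundary_on_Pow) (auto simp: is_cocycle_on_def)
  then obtain b where b: "\<And>F. F \<subseteq> W \<Longrightarrow> card F = f \<Longrightarrow> a F = coboundary b F"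
    unfolding is_coboundary_on_def by auto
  have "coboundary b F = 0" if "F \<in> ind_complex E W" "card F = Suc (f - 1)" for F
  proof -
    have "F \<subseteq> W" "indep E F" "card F = f"
      using that \<open>n + 1 \<le> f\<close> by (auto simp: ind_complex_def)
    moreover have "a F = 0" using supp \<open>indep E F\<close> by blast
    ultimately show ?thesis using b[of F] by simp
  qed
  then have "is_coboundary_on (ind_complex E W) (f - 1) b"
    using \<open>1 \<le> n\<close> \<open>n + 1 \<le> f\<close>
    by (intro is_coboundary_on_ind_complex[OF sg gf cf]) (auto simp: is_cocycle_on_def)
  then obtain c where c: "\<And>F. F \<subseteq> W \<Longrightarrow> indep E F \<Longrightarrow> card F = f - 1 \<Longrightarrow> b F = coboundary c F"
    unfolding is_coboundary_on_def ind_complex_def by auto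
  define a' where "a' F = (if F \<subseteq> W \<and> card F = f - 1 \<and> \<not> indep E F then b F - coboundary c F else 0)" for F
  have a'_on: "a' F = b F - coboundary c F" if "F \<subseteq> W" "card F = f - 1" for F
    using that c[of F] by (auto simp: a'_def)
  have "coboundary a' F = a F" if "F \<subseteq> W" for F
  proof (cases "card F = f")
    case True
    then have "coboundary a' F = coboundary (\<lambda>G. b G - coboundary c G) F"
      using that by (intro coboundary_cong a'_on) auto
    then show ?thesis using b[OF that True] by (simp add: coboundary_diff)
  next
    case False
    then have "coboundary a' F = 0"
      using \<open>n + 1 \<le> f\<close> by (intro coboundary_eq_0_if_card[of _ "f - 1"]) (auto simp: a'_def)
    moreover have "a F = 0" using supp False by blast
    ultimately show ?thesis by simp
  qed
  moreover have "{F. a' F \<noteq> 0} \<subseteq> {F. F \<subseteq> W \<and> card F = f - 1 \<and> \<not> indep E F}"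
    by (auto simp: a'_def)
  ultimately show ?thesis by blast
qed

section \<open>Complementation\<close>

definition complement_sign :: "'v::finite set \<Rightarrow> 'v set \<Rightarrow> 'k::comm_ring_1" where
  "complement_sign W F = (\<Prod>t\<in>F. ksign t W)"

definition complement_dual :: "'v::finite set \<Rightarrow> ('v set \<Rightarrow> 'k::comm_ring_1) \<Rightarrow> 'v set \<Rightarrow> 'k" where
  "complement_dual W g F = (if F \<subseteq> W then complement_sign W F * g (W - F) else 0)"

lemma complement_sign_square [simp]: "complement_sign W F * complement_sign W F = (1::'k::comm_ring_1)"
  unfolding complement_sign_def by (simp add: prod.distrib[symmetric])

lemma complement_sign_mult_cancel:
  "complement_sign W F * x = complement_sign W F * y \<longleftrightarrow> x = (y::'k::comm_ring_1)"
  by (metis complement_sign_square mult.assoc mult_1)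

lemma complement_dual_inverse:
  assumes "{F. a F \<noteq> 0} \<subseteq> Pow W"
  shows "complement_dual W (\<lambda>S. if S \<subseteq> W then complement_sign W (W - S) * a (W - S) else 0) = a"
proof
  fix F show "complement_dual W (\<lambda>S. if S \<subseteq> W then complement_sign W (W - S) * a (W - S) else 0) F = a F"
    using assms by (auto simp: complement_dual_def double_diff mult.assoc[symmetric])
qed

lemma ksign_insert_complement:
  fixes T W :: "'v::finite set"
  assumes "T \<subseteq> W" "s \<in> W - T"
  shows "ksign s (insert s T) = ksign s (W - T) * (ksign s W :: 'k::comm_ring_1)"
proof -
  have "{t\<in>W. vorder t < vorder s} = {t\<in>T. vorder t < vorder s} \<union> {t\<in>W - T. vorder t < vorder s}"
    using assms by auto
  then have "card {t\<in>W. vorder t < vorder s} =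
      card {t\<in>T. vorder t < vorder s} + card {t\<in>W - T. vorder t < vorder s}"
    by (simp add: card_Un_disjoint disjoint_iff)
  moreover have "{t\<in>insert s T. vorder t < vorder s} = {t\<in>T. vorder t < vorder s}" by auto
  ultimately show ?thesis
    by (simp add: ksign_def power_add mult.left_commute flip: power_mult_distrib)
qed

lemma boundary_complement_dual:
  fixes g :: "'v::finite set \<Rightarrow> 'k::comm_ring_1"
  assumes supp: "{S. g S \<noteq> 0} \<subseteq> Pow W" and "T \<subseteq> W"
  shows "complement_sign W (W - T) * boundary g T = coboundary (complement_dual W g) (W - T)"
proof -
  have "g (insert s T) = 0" if "s \<notin> W" for s
    using supp that by blast
  then have "boundary g T = (\<Sum>s\<in>W - T. ksign s (insert s T) * g (insert s T))"
    unfolding boundary_def by (intro sum.mono_neutral_right) force+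
  then have "complement_sign W (W - T) * boundary g T =
      (\<Sum>s\<in>W - T. complement_sign W (W - T) * ksign s (insert s T) * g (insert s T))"
    by (simp add: sum_distrib_left mult.assoc)
  also have "\<dots> = coboundary (complement_dual W g) (W - T)"
    unfolding coboundary_def
  proof (intro sum.cong refl)
    fix s assume s: "s \<in> W - T"
    have "complement_sign W (W - T) = ksign s W * (complement_sign W (W - T - {s}) :: 'k)"
      using s by (simp add: complement_sign_def prod.remove)
    then have "complement_sign W (W - T) * ksign s (insert s T) =
        (ksign s W * ksign s W) * (ksign s (W - T) * (complement_sign W (W - T - {s}) :: 'k))"
      unfolding ksign_insert_complement[OF \<open>T \<subseteq> W\<close> s] by (simp only: mult_ac)
    moreover have "W - (W - T - {s}) = insert s T" "W - T - {s} \<subseteq> W" using s \<open>T \<subseteq> W\<close> by auto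
    ultimately show "complement_sign W (W - T) * ksign s (insert s T) * g (insert s T) =
        ksign s (W - T) * complement_dual W g (W - T - {s})"
      by (simp add: complement_dual_def mult.assoc)
  qed
  finally show ?thesis .
qed

lemma boundary_outside:
  assumes "{S. g S \<noteq> 0} \<subseteq> Pow W" "\<not> T \<subseteq> W"
  shows "boundary g T = 0"
proof -
  have "g (insert s T) = 0" for s using assms by blast
  then show ?thesis by (simp add: boundary_def)
qed

lemma boundary_eq_iff_complement_dual:
  fixes g h :: "'v::finite set \<Rightarrow> 'k::comm_ring_1"
  assumes g: "{S. g S \<noteq> 0} \<subseteq> Pow W" and h: "{S. h S \<noteq> 0} \<subseteq> Pow W"
  shows "boundary g = h \<longleftrightarrow> (\<forall>F. F \<subseteq> W \<longrightarrow> coboundary (complement_dual W g) F = complement_dual W h F)"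
proof -
  have inside: "boundary g T = h T \<longleftrightarrow>
      coboundary (complement_dual W g) (W - T) = complement_dual W h (W - T)" if "T \<subseteq> W" for T
  proof -
    have "coboundary (complement_dual W g) (W - T) = complement_sign W (W - T) * boundary g T"
      using boundary_complement_dual[OF g that] by simp
    moreover have "complement_dual W h (W - T) = complement_sign W (W - T) * h T"
      using that by (simp add: complement_dual_def double_diff)
    ultimately show ?thesis by (simp only: complement_sign_mult_cancel)
  qed
  have outside: "boundary g T = h T" if "\<not> T \<subseteq> W" for T
  proof -
    have "h T = 0" using h that by blast
    then show ?thesis using boundary_outside[OF g that] by simp
  qed
  show ?thesis
  proof
    assume "boundary g = h"
    show "\<forall>F. F \<subseteq> W \<longrightarrow> coboundary (complement_dual W g) F = complement_dual W h F"
    proof (intro allI impI)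
      fix F assume "F \<subseteq> W"
      then show "coboundary (complement_dual W g) F = complement_dual W h F"
        using inside[of "W - F"] \<open>boundary g = h\<close> by (simp add: double_diff)
    qed
  next
    assume dual: "\<forall>F. F \<subseteq> W \<longrightarrow> coboundary (complement_dual W g) F = complement_dual W h F"
    show "boundary g = h"
    proof
      fix T show "boundary g T = h T"
        using inside[of T] outside[of T] dual by (cases "T \<subseteq> W") auto
    qed
  qed
qed

section \<open>Multidegree strands of the Koszul complex\<close>

definition set_exps :: "'v::finite set \<Rightarrow> 'v \<Rightarrow>\<^sub>0 nat" where
  "set_exps S = (\<Sum>t\<in>S. Poly_Mapping.single t 1)"

definition has_edge :: "('v \<Rightarrow> 'v \<Rightarrow> bool) \<Rightarrow> ('v \<Rightarrow>\<^sub>0 nat) \<Rightarrow> bool" where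
  "has_edge E m \<longleftrightarrow> (\<exists>u v. E u v \<and> 0 < Poly_Mapping.lookup m u \<and> 0 < Poly_Mapping.lookup m v)"

text \<open>S indexes a basis element x^(\<alpha> - S) e_S of multidegree \<alpha> of I(G) \<otimes> K: x_S must divide
  x^\<alpha>, and x^(\<alpha> - S) must lie in I(G).\<close>
definition admissible :: "('v::finite \<Rightarrow> 'v \<Rightarrow> bool) \<Rightarrow> ('v \<Rightarrow>\<^sub>0 nat) \<Rightarrow> 'v set \<Rightarrow> bool" where
  "admissible E \<alpha> S \<longleftrightarrow> (\<forall>s\<in>S. 0 < Poly_Mapping.lookup \<alpha> s) \<and> has_edge E (\<alpha> - set_exps S)"

lemma lookup_set_exps: "Poly_Mapping.lookup (set_exps S) v = (if v \<in> S then 1 else 0)"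
  unfolding set_exps_def lookup_sum by (simp add: lookup_single when_def)

lemma mon_deg_eq_sum: "mon_deg (m :: 'v::finite \<Rightarrow>\<^sub>0 nat) = (\<Sum>v\<in>UNIV. Poly_Mapping.lookup m v)"
  unfolding mon_deg_def by (rule sum.mono_neutral_left) (auto simp: in_keys_iff)

lemma mon_deg_add: "mon_deg ((a::'v::finite \<Rightarrow>\<^sub>0 nat) + b) = mon_deg a + mon_deg b"
  unfolding mon_deg_eq_sum by (simp add: lookup_add sum.distrib)

lemma mon_deg_set_exps: "mon_deg (set_exps (S::'v::finite set)) = card S"
  unfolding mon_deg_eq_sum lookup_set_exps by (simp add: sum.If_cases)

lemma diff_set_exps_add:
  "\<forall>s\<in>S. 0 < Poly_Mapping.lookup \<alpha> s \<Longrightarrow> \<alpha> - set_exps S + set_exps S = \<alpha>"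
  by (intro poly_mapping_eqI) (auto simp: lookup_add lookup_minus lookup_set_exps)

lemma admissible_insert:
  assumes "2 \<le> Poly_Mapping.lookup \<alpha> v" "v \<notin> S" "admissible E \<alpha> S"
  shows "admissible E \<alpha> (insert v S)"
proof -
  have "0 < Poly_Mapping.lookup (\<alpha> - set_exps (insert v S)) u"
    if "0 < Poly_Mapping.lookup (\<alpha> - set_exps S) u" for u
    using assms(1,2) that by (auto simp: lookup_minus lookup_set_exps split: if_splits)
  then show ?thesis using assms unfolding admissible_def has_edge_def by auto
qed

lemma strand_exact_nonsqfree:
  fixes \<gamma> :: "'v::finite set \<Rightarrow> 'k::comm_ring_1"
  assumes "2 \<le> Poly_Mapping.lookup \<alpha> v"
    and supp: "{S. \<gamma> S \<noteq> 0} \<subseteq> {S. card S = i \<and> admissible E \<alpha> S}"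
    and cycle: "boundary \<gamma> = (\<lambda>_. 0)"
  obtains \<beta> where "{S. \<beta> S \<noteq> 0} \<subseteq> {S. card S = Suc i \<and> admissible E \<alpha> S}" "boundary \<beta> = \<gamma>"
proof
  show "boundary (join v \<gamma>) = \<gamma>"
  proof
    fix T
    have "join v (boundary \<gamma>) T = 0" by (simp add: join_def cycle)
    then show "boundary (join v \<gamma>) T = \<gamma> T"
      using boundary_join[of v \<gamma> T] by simp
  qed
  show "{S. join v \<gamma> S \<noteq> 0} \<subseteq> {S. card S = Suc i \<and> admissible E \<alpha> S}"
  proof safe
    fix S assume "join v \<gamma> S \<noteq> 0"
    then have S: "v \<in> S" "\<gamma> (S - {v}) \<noteq> 0"
      by (auto simp: join_def split: if_splits)
    then have "card (S - {v}) = i" "admissible E \<alpha> (S - {v})"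
      using supp by blast+
    moreover have "insert v (S - {v}) = S" using S(1) by blast
    ultimately show "card S = Suc i" "admissible E \<alpha> S"
      using admissible_insert[OF assms(1), of "S - {v}"] card_Suc_Diff1[OF finite S(1)] by auto
  qed
qed

lemma admissible_sqfree_iff:
  assumes "\<And>v. Poly_Mapping.lookup \<alpha> v \<le> 1"
  shows "admissible E \<alpha> S \<longleftrightarrow>
    S \<subseteq> {v. 0 < Poly_Mapping.lookup \<alpha> v} \<and> \<not> indep E ({v. 0 < Poly_Mapping.lookup \<alpha> v} - S)"
proof -
  define W where "W = {v. 0 < Poly_Mapping.lookup \<alpha> v}"
  have "Poly_Mapping.lookup \<alpha> v = (if v \<in> W then 1 else 0)" for v
    using assms[of v] by (auto simp: W_def)
  then have "0 < Poly_Mapping.lookup (\<alpha> - set_exps S) u \<longleftrightarrow> u \<in> W - S" for u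
    by (simp add: lookup_minus lookup_set_exps)
  then show ?thesis
    unfolding W_def[symmetric] by (auto simp: admissible_def has_edge_def indep_def W_def)
qed

lemma mon_deg_sqfree:
  fixes \<alpha> :: "'v::finite \<Rightarrow>\<^sub>0 nat"
  assumes "\<And>v. Poly_Mapping.lookup \<alpha> v \<le> 1"
  shows "mon_deg \<alpha> = card {v. 0 < Poly_Mapping.lookup \<alpha> v}"
proof -
  define W where "W = {v. 0 < Poly_Mapping.lookup \<alpha> v}"
  have lookup_\<alpha>: "Poly_Mapping.lookup \<alpha> v = (if v \<in> W then 1 else 0)" for v
    using assms[of v] by (auto simp: W_def)
  have "mon_deg \<alpha> = card W"
    unfolding mon_deg_eq_sum lookup_\<alpha> by (simp add: sum.If_cases)
  then show ?thesis by (simp add: W_def)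
qed

lemma strand_exact_sqfree:
  fixes E :: "'v::finite \<Rightarrow> 'v \<Rightarrow> bool" and \<gamma> :: "'v set \<Rightarrow> 'k::comm_ring_1"
  assumes sg: "simple_graph E" and gf: "gap_free E" and "1 \<le> n" and cf: "claw_free n E"
    and sqfree: "\<And>v. Poly_Mapping.lookup \<alpha> v \<le> 1"
    and supp: "{S. \<gamma> S \<noteq> 0} \<subseteq> {S. card S = i \<and> admissible E \<alpha> S}"
    and deg: "i + n + 1 \<le> mon_deg \<alpha>"
    and cycle: "boundary \<gamma> = (\<lambda>_. 0)"
  obtains \<beta> where "{S. \<beta> S \<noteq> 0} \<subseteq> {S. card S = Suc i \<and> admissible E \<alpha> S}" "boundary \<beta> = \<gamma>"
proof -
  define W where "W = {v. 0 < Poly_Mapping.lookup \<alpha> v}"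
  define f where "f = card W - i"
  have "n + 1 \<le> f" using deg mon_deg_sqfree[OF sqfree] by (simp add: f_def W_def)
  have admissible_iff: "admissible E \<alpha> S \<longleftrightarrow> S \<subseteq> W \<and> \<not> indep E (W - S)" for S
    using admissible_sqfree_iff[OF sqfree] by (simp add: W_def)
  have card_complement: "card (W - S) = card W - card S" "card S \<le> card W" if "S \<subseteq> W" for S
    using that by (auto simp: card_Diff_subset card_mono)
  have \<gamma>_supp: "{S. \<gamma> S \<noteq> 0} \<subseteq> Pow W" using supp admissible_iff by blast
  have "F \<subseteq> W \<and> card F = f \<and> \<not> indep E F" if "complement_dual W \<gamma> F \<noteq> 0" for F
  proof -
    have "F \<subseteq> W" "\<gamma> (W - F) \<noteq> 0" using that by (auto simp: complement_dual_def split: if_splits)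
    then show ?thesis
      using supp card_complement[of F] by (auto simp: admissible_iff double_diff f_def)
  qed
  then have dual_supp: "{F. complement_dual W \<gamma> F \<noteq> 0} \<subseteq> {F. F \<subseteq> W \<and> card F = f \<and> \<not> indep E F}"
    by blast
  have "\<forall>F. F \<subseteq> W \<longrightarrow> coboundary (complement_dual W \<gamma>) F = complement_dual W (\<lambda>_. 0) F"
    using cycle by (subst boundary_eq_iff_complement_dual[OF \<gamma>_supp, symmetric]) auto
  then have dual_cocycle: "coboundary (complement_dual W \<gamma>) F = 0" if "F \<subseteq> W" for F
    using that by (simp add: complement_dual_def)
  obtain a where a_supp: "{F. a F \<noteq> 0} \<subseteq> {F. F \<subseteq> W \<and> card F = f - 1 \<and> \<not> indep E F}"
    and a: "\<And>F. F \<subseteq> W \<Longrightarrow> coboundary a F = complement_dual W \<gamma> F"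
    using relative_cocycle_is_coboundary[OF sg gf \<open>1 \<le> n\<close> claw_free_imp_claw_free_on[OF cf]
      dual_supp dual_cocycle \<open>n + 1 \<le> f\<close>] by blast
  define \<beta> where "\<beta> S = (if S \<subseteq> W then complement_sign W (W - S) * a (W - S) else 0)" for S
  have \<beta>_supp: "{S. \<beta> S \<noteq> 0} \<subseteq> Pow W" by (auto simp: \<beta>_def)
  have "complement_dual W \<beta> = a"
    unfolding \<beta>_def using a_supp by (intro complement_dual_inverse) blast
  then have "boundary \<beta> = \<gamma>"
    using a by (simp add: boundary_eq_iff_complement_dual[OF \<beta>_supp \<gamma>_supp])
  moreover have "card S = Suc i \<and> admissible E \<alpha> S" if "\<beta> S \<noteq> 0" for S
  proof -
    have "S \<subseteq> W" "a (W - S) \<noteq> 0" using that by (auto simp: \<beta>_def split: if_splits)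
    then show ?thesis
      using a_supp card_complement[of S] \<open>n + 1 \<le> f\<close> by (auto simp: admissible_iff f_def)
  qed
  ultimately show ?thesis using that by blast
qed

lemma strand_exact:
  fixes E :: "'v::finite \<Rightarrow> 'v \<Rightarrow> bool" and \<gamma> :: "'v set \<Rightarrow> 'k::comm_ring_1"
  assumes "simple_graph E" "gap_free E" "1 \<le> n" "claw_free n E"
    and supp: "{S. \<gamma> S \<noteq> 0} \<subseteq> {S. card S = i \<and> admissible E \<alpha> S}"
    and "i + n + 1 \<le> mon_deg \<alpha>"
    and cycle: "boundary \<gamma> = (\<lambda>_. 0)"
  obtains \<beta> where "{S. \<beta> S \<noteq> 0} \<subseteq> {S. card S = Suc i \<and> admissible E \<alpha> S}" "boundary \<beta> = \<gamma>"
proof (cases "\<exists>v. 2 \<le> Poly_Mapping.lookup \<alpha> v")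
  case True
  then obtain v where "2 \<le> Poly_Mapping.lookup \<alpha> v" by blast
  then show ?thesis by (rule strand_exact_nonsqfree[OF _ supp cycle]) (rule that)
next
  case False
  have "Poly_Mapping.lookup \<alpha> v \<le> 1" for v
    using False[unfolded not_ex, rule_format, of v] by linarith
  then show ?thesis by (rule strand_exact_sqfree[OF assms(1-4) _ assms(5-7)]) (rule that)
qed

section \<open>The Koszul complex of the edge ideal\<close>

lemma lookup_single_mult:
  fixes p :: "('v \<Rightarrow>\<^sub>0 nat) \<Rightarrow>\<^sub>0 'k::comm_ring_1"
  shows "Poly_Mapping.lookup (Poly_Mapping.single a k * p) m =
    (if \<forall>v. Poly_Mapping.lookup a v \<le> Poly_Mapping.lookup m v
     then k * Poly_Mapping.lookup p (m - a) else 0)"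
proof -
  have "Poly_Mapping.lookup (Poly_Mapping.single a k * p) m =
      k * (\<Sum>q. Poly_Mapping.lookup p q when m = a + q)"
    by (simp add: lookup_mult lookup_single when_mult)
  moreover have "m = a + q \<longleftrightarrow> q = m - a" if "\<forall>v. Poly_Mapping.lookup a v \<le> Poly_Mapping.lookup m v" for q
    using that by (auto intro!: poly_mapping_eqI simp: lookup_add lookup_minus)
  moreover have "m \<noteq> a + q" if "\<not> (\<forall>v. Poly_Mapping.lookup a v \<le> Poly_Mapping.lookup m v)" for q
    using that by (auto simp: lookup_add)
  ultimately show ?thesis by simp
qed

lemma Var_mult_Var:
  "c * Var u * Var v = Poly_Mapping.single (Poly_Mapping.single u 1 + Poly_Mapping.single v 1) (1::'k::comm_ring_1) * c"
  unfolding Var_def by (simp add: mult_single mult.commute mult.left_commute)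

lemma has_edge_if_mem_edge_ideal:
  fixes E :: "'v::finite \<Rightarrow> 'v \<Rightarrow> bool"
  assumes "p \<in> (edge_ideal E :: ('v, 'k::comm_ring_1) mpoly set)" "Poly_Mapping.lookup p m \<noteq> 0"
  shows "has_edge E m"
proof -
  obtain c where "p = (\<Sum>e\<in>{(u, v). E u v}. c e * Var (fst e) * Var (snd e))"
    using assms(1) unfolding edge_ideal_def by blast
  then have "(\<Sum>e\<in>{(u, v). E u v}. Poly_Mapping.lookup (c e * Var (fst e) * Var (snd e)) m) \<noteq> 0"
    using assms(2) by (simp add: lookup_sum)
  then obtain u v where "E u v" "Poly_Mapping.lookup (c (u, v) * Var u * Var v) m \<noteq> 0"
    by (metis (no_types, lifting) case_prodE fst_conv mem_Collect_eq snd_conv sum.not_neutral_contains_not_neutral)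
  then have "E u v" "\<forall>w. Poly_Mapping.lookup (Poly_Mapping.single u 1 + Poly_Mapping.single v (1::nat)) w
      \<le> Poly_Mapping.lookup m w"
    unfolding Var_mult_Var lookup_single_mult by (auto split: if_splits)
  then show ?thesis
    unfolding has_edge_def by (metis add_gr_0 lookup_add lookup_single_eq less_le_trans zero_less_one)
qed

lemma edge_ideal_add:
  assumes "p \<in> edge_ideal E" "q \<in> edge_ideal E"
  shows "p + q \<in> (edge_ideal E :: ('v::finite, 'k::comm_ring_1) mpoly set)"
proof -
  obtain c d where "p = (\<Sum>e\<in>{(u, v). E u v}. c e * Var (fst e) * Var (snd e))"
      "q = (\<Sum>e\<in>{(u, v). E u v}. d e * Var (fst e) * Var (snd e))"
    using assms unfolding edge_ideal_def by blast
  then have "p + q = (\<Sum>e\<in>{(u, v). E u v}. (c e + d e) * Var (fst e) * Var (snd e))"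
    by (simp add: sum.distrib distrib_right)
  then show ?thesis unfolding edge_ideal_def by (intro CollectI exI[of _ "\<lambda>e. c e + d e"])
qed

lemma monomial_mem_edge_ideal:
  fixes E :: "'v::finite \<Rightarrow> 'v \<Rightarrow> bool"
  assumes "has_edge E m" "\<forall>u. \<not> E u u"
  shows "Poly_Mapping.single m k \<in> (edge_ideal E :: ('v, 'k::comm_ring_1) mpoly set)"
proof -
  obtain u v where uv: "E u v" "u \<noteq> v" "0 < Poly_Mapping.lookup m u" "0 < Poly_Mapping.lookup m v"
    using assms unfolding has_edge_def by metis
  define r where "r = m - Poly_Mapping.single u 1 - Poly_Mapping.single v 1"
  have "Poly_Mapping.single u 1 + Poly_Mapping.single v 1 + r = m"
    using uv by (intro poly_mapping_eqI) (auto simp: r_def lookup_add lookup_minus lookup_single when_def)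
  then have "Poly_Mapping.single m k = (\<Sum>e\<in>{(u, v). E u v}.
      (if e = (u, v) then Poly_Mapping.single r k else 0) * Var (fst e) * Var (snd e))"
    using uv by (simp add: if_distrib[of "\<lambda>x. x * _"] sum.delta' Var_mult_Var mult_single add.commute cong: if_cong)
  then show ?thesis unfolding edge_ideal_def
    by (intro CollectI exI[of _ "\<lambda>e. if e = (u, v) then Poly_Mapping.single r k else 0"])
qed

lemma mem_edge_ideal_iff:
  fixes E :: "'v::finite \<Rightarrow> 'v \<Rightarrow> bool"
  assumes "\<forall>u. \<not> E u u"
  shows "p \<in> (edge_ideal E :: ('v, 'k::comm_ring_1) mpoly set) \<longleftrightarrow>
    (\<forall>m. Poly_Mapping.lookup p m \<noteq> 0 \<longrightarrow> has_edge E m)"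
proof
  assume edges: "\<forall>m. Poly_Mapping.lookup p m \<noteq> 0 \<longrightarrow> has_edge E m"
  have "(\<Sum>m\<in>A. Poly_Mapping.single m (Poly_Mapping.lookup p m)) \<in> edge_ideal E"
    if "finite A" "A \<subseteq> Poly_Mapping.keys p" for A
    using that
  proof (induction A rule: finite_induct)
    case empty
    then show ?case unfolding edge_ideal_def by (auto intro!: exI[of _ "\<lambda>_. 0"])
  next
    case (insert m A)
    then show ?case
      using edges assms by (simp add: edge_ideal_add monomial_mem_edge_ideal in_keys_iff)
  qed
  moreover have "p = (\<Sum>m\<in>Poly_Mapping.keys p. Poly_Mapping.single m (Poly_Mapping.lookup p m))"
    by (intro poly_mapping_eqI) (simp add: lookup_sum lookup_single when_def in_keys_iff sum.delta)
  ultimately show "p \<in> edge_ideal E" by (metis finite_keys order_refl)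
qed (use has_edge_if_mem_edge_ideal in blast)

text \<open>The coefficient of x^(\<alpha> - S) e_S in a Koszul chain c; for fixed \<alpha> this is the
  multidegree-\<alpha> strand of c.\<close>
definition strand :: "('v::finite set \<Rightarrow> ('v, 'k::comm_ring_1) mpoly) \<Rightarrow> ('v \<Rightarrow>\<^sub>0 nat) \<Rightarrow> 'v set \<Rightarrow> 'k" where
  "strand c \<alpha> S =
    (if \<forall>s\<in>S. 0 < Poly_Mapping.lookup \<alpha> s then Poly_Mapping.lookup (c S) (\<alpha> - set_exps S) else 0)"

lemma strand_add_set_exps: "strand c (m + set_exps S) S = Poly_Mapping.lookup (c S) m"
  unfolding strand_def by (simp add: lookup_add lookup_set_exps)

lemma strand_eqI:
  assumes "\<And>\<alpha>. strand c \<alpha> = strand c' \<alpha>"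
  shows "c = c'"
proof
  fix S show "c S = c' S"
    using assms strand_add_set_exps by (metis poly_mapping_eqI)
qed

lemma lookup_koszul_d: "Poly_Mapping.lookup (koszul_d c T) m = boundary (strand c (m + set_exps T)) T"
  unfolding koszul_d_def boundary_def lookup_sum
proof (intro sum.cong refl)
  fix s assume s: "s \<in> UNIV - T"
  have "Poly_Mapping.single 0 (ksign s (insert s T)) * Var s =
      Poly_Mapping.single (Poly_Mapping.single s 1) (ksign s (insert s T) :: 'a)"
    unfolding Var_def by (simp add: mult_single)
  moreover have "(\<forall>v. Poly_Mapping.lookup (Poly_Mapping.single s (1::nat)) v \<le> Poly_Mapping.lookup m v)
      \<longleftrightarrow> 0 < Poly_Mapping.lookup m s"
    by (auto simp: lookup_single when_def)
  moreover have "(\<forall>t\<in>insert s T. 0 < Poly_Mapping.lookup (m + set_exps T) t) \<longleftrightarrow> 0 < Poly_Mapping.lookup m s"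
    using s by (auto simp: lookup_add lookup_set_exps)
  moreover have "m + set_exps T - set_exps (insert s T) = m - Poly_Mapping.single s 1"
    using s by (intro poly_mapping_eqI) (auto simp: lookup_add lookup_minus lookup_set_exps lookup_single when_def)
  ultimately show "Poly_Mapping.lookup (Poly_Mapping.single 0 (ksign s (insert s T)) * Var s * c (insert s T)) m =
      ksign s (insert s T) * strand c (m + set_exps T) (insert s T)"
    by (simp add: lookup_single_mult strand_def)
qed

lemma strand_koszul_d: "strand (koszul_d c) \<alpha> = boundary (strand c \<alpha>)"
proof
  fix T show "strand (koszul_d c) \<alpha> T = boundary (strand c \<alpha>) T"
  proof (cases "\<forall>t\<in>T. 0 < Poly_Mapping.lookup \<alpha> t")
    case True
    then show ?thesis by (simp add: strand_def lookup_koszul_d diff_set_exps_add)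
  next
    case False
    then obtain t where "t \<in> T" "Poly_Mapping.lookup \<alpha> t = 0" by auto
    then have "strand c \<alpha> (insert s T) = 0" for s by (auto simp: strand_def)
    then have "boundary (strand c \<alpha>) T = 0" by (simp add: boundary_def)
    moreover have "strand (koszul_d c) \<alpha> T = 0" unfolding strand_def if_not_P[OF False] ..
    ultimately show ?thesis by simp
  qed
qed

lemma koszul_d_koszul_d: "koszul_d (koszul_d c) = (\<lambda>_. 0)"
  by (rule strand_eqI) (simp add: strand_koszul_d boundary_boundary fun_eq_iff strand_def)

definition admissible_chain :: "('v::finite \<Rightarrow> 'v \<Rightarrow> bool) \<Rightarrow> nat \<Rightarrow> int \<Rightarrow> ('v set \<Rightarrow> ('v, 'k::comm_ring_1) mpoly) \<Rightarrow> bool" where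
  "admissible_chain E i j c \<longleftrightarrow>
    (\<forall>\<alpha> S. strand c \<alpha> S \<noteq> 0 \<longrightarrow> card S = i \<and> admissible E \<alpha> S \<and> int (mon_deg \<alpha>) = j)"

lemma koszul_chains_edge_ideal_iff:
  fixes E :: "'v::finite \<Rightarrow> 'v \<Rightarrow> bool" and c :: "'v set \<Rightarrow> ('v, 'k::comm_ring_1) mpoly"
  assumes irrefl: "\<forall>u. \<not> E u u"
  shows "c \<in> koszul_chains (edge_ideal E) i j \<longleftrightarrow> admissible_chain E i j c"
proof
  assume c: "c \<in> koszul_chains (edge_ideal E) i j"
  show "admissible_chain E i j c"
    unfolding admissible_chain_def
  proof (intro allI impI)
    fix \<alpha> S assume "strand c \<alpha> S \<noteq> 0"
    then have pos: "\<forall>s\<in>S. 0 < Poly_Mapping.lookup \<alpha> s"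
      and m: "Poly_Mapping.lookup (c S) (\<alpha> - set_exps S) \<noteq> 0"
      by (auto simp: strand_def split: if_splits)
    then have "c S \<noteq> 0" by auto
    then have "card S = i" "c S \<in> edge_ideal E" "homogeneous (j - int i) (c S)"
      using c unfolding koszul_chains_def by auto
    moreover have "mon_deg \<alpha> = mon_deg (\<alpha> - set_exps S) + card S"
      using diff_set_exps_add[OF pos] mon_deg_add mon_deg_set_exps by metis
    ultimately show "card S = i \<and> admissible E \<alpha> S \<and> int (mon_deg \<alpha>) = j"
      using pos m mem_edge_ideal_iff[of E, OF irrefl]
      by (auto simp: admissible_def homogeneous_def in_keys_iff)
  qed
next
  assume c: "admissible_chain E i j c"
  have monomials: "card S = i \<and> has_edge E m \<and> int (mon_deg m) = j - int i"
    if "Poly_Mapping.lookup (c S) m \<noteq> 0" for S m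
  proof -
    have "strand c (m + set_exps S) S \<noteq> 0" using that by (simp add: strand_add_set_exps)
    then have "card S = i" "admissible E (m + set_exps S) S" "int (mon_deg (m + set_exps S)) = j"
      using c unfolding admissible_chain_def by blast+
    then show ?thesis by (simp add: admissible_def mon_deg_add mon_deg_set_exps)
  qed
  show "c \<in> koszul_chains (edge_ideal E) i j"
    unfolding koszul_chains_def
  proof (intro CollectI allI impI)
    fix S assume "c S \<noteq> 0"
    then obtain m where "Poly_Mapping.lookup (c S) m \<noteq> 0"
      by (metis lookup_zero poly_mapping_eqI)
    moreover have "c S \<in> edge_ideal E"
      using monomials mem_edge_ideal_iff[of E "c S", OF irrefl] by blast
    ultimately show "card S = i \<and> c S \<in> edge_ideal E \<and> homogeneous (j - int i) (c S)"
      using monomials by (auto simp: homogeneous_def in_keys_iff)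
  qed
qed

lemma admissible_chain_koszul_d:
  assumes "admissible_chain E (Suc i) j c"
  shows "admissible_chain E i j (koszul_d c)"
  unfolding admissible_chain_def
proof (intro allI impI)
  fix \<alpha> T assume "strand (koszul_d c) \<alpha> T \<noteq> 0"
  then have "boundary (strand c \<alpha>) T \<noteq> 0" by (simp add: strand_koszul_d)
  then obtain s where s: "s \<in> UNIV - T" "ksign s (insert s T) * strand c \<alpha> (insert s T) \<noteq> 0"
    unfolding boundary_def by (meson sum.not_neutral_contains_not_neutral)
  then have "strand c \<alpha> (insert s T) \<noteq> 0" by auto
  then have "card (insert s T) = Suc i" "admissible E \<alpha> (insert s T)" "int (mon_deg \<alpha>) = j"
    using assms unfolding admissible_chain_def by blast+
  moreover have "0 < Poly_Mapping.lookup (\<alpha> - set_exps T) u"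
    if "0 < Poly_Mapping.lookup (\<alpha> - set_exps (insert s T)) u" for u
    using that by (auto simp: lookup_minus lookup_set_exps split: if_splits)
  ultimately show "card T = i \<and> admissible E \<alpha> T \<and> int (mon_deg \<alpha>) = j"
    using s(1) unfolding admissible_def has_edge_def by auto
qed

lemma finite_strand_support: "finite {\<alpha>. \<exists>S. strand c \<alpha> S \<noteq> 0}"
proof (rule finite_subset)
  show "{\<alpha>. \<exists>S. strand c \<alpha> S \<noteq> 0} \<subseteq> (\<Union>S. (\<lambda>m. m + set_exps S) ` Poly_Mapping.keys (c S))"
  proof safe
    fix \<alpha> S assume "strand c \<alpha> S \<noteq> 0"
    then have "\<forall>s\<in>S. 0 < Poly_Mapping.lookup \<alpha> s" "\<alpha> - set_exps S \<in> Poly_Mapping.keys (c S)"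
      by (auto simp: strand_def in_keys_iff split: if_splits)
    moreover from this(1) have "\<alpha> = (\<alpha> - set_exps S) + set_exps S"
      by (simp add: diff_set_exps_add)
    ultimately show "\<alpha> \<in> (\<Union>S. (\<lambda>m. m + set_exps S) ` Poly_Mapping.keys (c S))"
      by blast
  qed
qed simp

lemma strand_surj:
  fixes B :: "('v::finite \<Rightarrow>\<^sub>0 nat) \<Rightarrow> 'v set \<Rightarrow> 'k::comm_ring_1"
  assumes fin: "finite {\<alpha>. \<exists>S. B \<alpha> S \<noteq> 0}"
    and pos: "\<And>\<alpha> S s. B \<alpha> S \<noteq> 0 \<Longrightarrow> s \<in> S \<Longrightarrow> 0 < Poly_Mapping.lookup \<alpha> s"
  shows "\<exists>b. strand b = B"
proof
  define b where "b S = Abs_poly_mapping (\<lambda>m. B (m + set_exps S) S)" for S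
  have "{m. B (m + set_exps S) S \<noteq> 0} \<subseteq> (\<lambda>\<alpha>. \<alpha> - set_exps S) ` {\<alpha>. \<exists>S. B \<alpha> S \<noteq> 0}" for S
    by (auto intro: image_eqI[where x = "_ + set_exps S"])
  then have "finite {m. B (m + set_exps S) S \<noteq> 0}" for S
    using fin by (meson finite_imageI finite_subset)
  then have lookup_b: "Poly_Mapping.lookup (b S) m = B (m + set_exps S) S" for S m
    by (simp add: b_def)
  show "strand b = B"
  proof (intro ext)
    fix \<alpha> S show "strand b \<alpha> S = B \<alpha> S"
    proof (cases "\<forall>s\<in>S. 0 < Poly_Mapping.lookup \<alpha> s")
      case True
      then show ?thesis by (simp add: strand_def lookup_b diff_set_exps_add)
    next
      case False
      then have "B \<alpha> S = 0" using pos by blast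
      then show ?thesis unfolding strand_def if_not_P[OF False] by simp
    qed
  qed
qed

lemma admissible_cycle_strand_exact:
  fixes E :: "'v::finite \<Rightarrow> 'v \<Rightarrow> bool" and c :: "'v set \<Rightarrow> ('v, 'k::comm_ring_1) mpoly"
  assumes sg: "simple_graph E" and gf: "gap_free E" and "1 \<le> n" and cf: "claw_free n E"
    and c: "admissible_chain E i j c" and cycle: "koszul_d c = (\<lambda>_. 0)" and deg: "int i + int n < j"
  shows "\<exists>\<beta>. {S. \<beta> S \<noteq> 0} \<subseteq> {S. card S = Suc i \<and> admissible E \<alpha> S} \<and>
    boundary \<beta> = strand c \<alpha> \<and> (\<beta> \<noteq> (\<lambda>_. 0) \<longrightarrow> (\<exists>S. strand c \<alpha> S \<noteq> 0))"
proof (cases "\<exists>S. strand c \<alpha> S \<noteq> 0")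
  case True
  then obtain S where "strand c \<alpha> S \<noteq> 0" by blast
  then have "int (mon_deg \<alpha>) = j" using c unfolding admissible_chain_def by blast
  then have deg\<alpha>: "i + n + 1 \<le> mon_deg \<alpha>" using deg by linarith
  have "{S. strand c \<alpha> S \<noteq> 0} \<subseteq> {S. card S = i \<and> admissible E \<alpha> S}"
    using c unfolding admissible_chain_def by blast
  moreover note deg\<alpha>
  moreover have "boundary (strand c \<alpha>) = (\<lambda>_. 0)"
    using strand_koszul_d[of c \<alpha>, symmetric] by (simp add: cycle strand_def fun_eq_iff)
  ultimately obtain \<beta> where "{S. \<beta> S \<noteq> 0} \<subseteq> {S. card S = Suc i \<and> admissible E \<alpha> S}"
      "boundary \<beta> = strand c \<alpha>"
    using strand_exact[OF sg gf \<open>1 \<le> n\<close> cf] by blast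
  then show ?thesis using True by blast
next
  case False
  then show ?thesis by (intro exI[of _ "\<lambda>_. 0"]) (simp add: boundary_def fun_eq_iff)
qed

lemma admissible_cycle_is_boundary:
  fixes E :: "'v::finite \<Rightarrow> 'v \<Rightarrow> bool" and c :: "'v set \<Rightarrow> ('v, 'k::comm_ring_1) mpoly"
  assumes "simple_graph E" "gap_free E" "1 \<le> n" "claw_free n E"
    and c: "admissible_chain E i j c" and "koszul_d c = (\<lambda>_. 0)" "int i + int n < j"
  shows "\<exists>b. admissible_chain E (Suc i) j b \<and> koszul_d b = c"
proof -
  define P where "P \<alpha> \<beta> \<longleftrightarrow> {S. \<beta> S \<noteq> 0} \<subseteq> {S. card S = Suc i \<and> admissible E \<alpha> S} \<and>
      boundary \<beta> = strand c \<alpha> \<and> (\<beta> \<noteq> (\<lambda>_. 0) \<longrightarrow> (\<exists>S. strand c \<alpha> S \<noteq> 0))" for \<alpha> \<beta>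
  have "\<exists>\<beta>. P \<alpha> \<beta>" for \<alpha>
    unfolding P_def by (rule admissible_cycle_strand_exact[OF assms])
  then obtain B where B: "\<And>\<alpha>. P \<alpha> (B \<alpha>)"
    using choice[of P] by blast
  have B_nonzero: "\<exists>S'. strand c \<alpha> S' \<noteq> 0" if "B \<alpha> S \<noteq> 0" for \<alpha> S
  proof -
    have "B \<alpha> \<noteq> (\<lambda>_. 0)" using that by auto
    then show ?thesis using B[of \<alpha>] unfolding P_def by blast
  qed
  have "finite {\<alpha>. \<exists>S. B \<alpha> S \<noteq> 0}"
    by (rule finite_subset[OF _ finite_strand_support[of c]]) (auto dest: B_nonzero)
  moreover have "0 < Poly_Mapping.lookup \<alpha> s" if "B \<alpha> S \<noteq> 0" "s \<in> S" for \<alpha> S s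
    using B[of \<alpha>] that unfolding P_def admissible_def by blast
  ultimately obtain b where b: "strand b = B"
    using strand_surj by blast
  have "admissible_chain E (Suc i) j b"
    unfolding admissible_chain_def b
  proof (intro allI impI)
    fix \<alpha> S assume "B \<alpha> S \<noteq> 0"
    then have "card S = Suc i \<and> admissible E \<alpha> S" "\<exists>S'. strand c \<alpha> S' \<noteq> 0"
      using B[of \<alpha>] B_nonzero unfolding P_def by blast+
    then show "card S = Suc i \<and> admissible E \<alpha> S \<and> int (mon_deg \<alpha>) = j"
      using c unfolding admissible_chain_def by blast
  qed
  moreover have "koszul_d b = c"
    using B unfolding P_def by (intro strand_eqI) (simp add: strand_koszul_d b)
  ultimately show ?thesis by blast
qed

lemma koszul_cycles_eq_boundaries:
  fixes E :: "'v::finite \<Rightarrow> 'v \<Rightarrow> bool"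
  assumes sg: "simple_graph E" and gf: "gap_free E" and "1 \<le> n" and cf: "claw_free n E"
    and deg: "int n < j - int i"
  shows "{c \<in> koszul_chains (edge_ideal E :: ('v, 'k::comm_ring_1) mpoly set) i j. koszul_d c = (\<lambda>_. 0)}
    = koszul_d ` koszul_chains (edge_ideal E) (Suc i) j"
proof -
  have "\<forall>u. \<not> E u u" using sg unfolding simple_graph_def by blast
  note chains = koszul_chains_edge_ideal_iff[of E, OF this]
  have "c \<in> koszul_d ` koszul_chains (edge_ideal E) (Suc i) j"
    if c: "c \<in> koszul_chains (edge_ideal E) i j" and cycle: "koszul_d c = (\<lambda>_. 0)"
    for c :: "'v set \<Rightarrow> ('v, 'k) mpoly"
  proof -
    have "admissible_chain E i j c" using c chains by blast
    moreover have "int i + int n < j" using deg by simp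
    ultimately obtain b where "admissible_chain E (Suc i) j b" "koszul_d b = c"
      using admissible_cycle_is_boundary[OF sg gf \<open>1 \<le> n\<close> cf _ cycle] by blast
    then show ?thesis using chains by blast
  qed
  moreover have "koszul_d c \<in> koszul_chains (edge_ideal E) i j" "koszul_d (koszul_d c) = (\<lambda>_. 0)"
    if "c \<in> koszul_chains (edge_ideal E) (Suc i) j" for c :: "'v set \<Rightarrow> ('v, 'k) mpoly"
    using that chains admissible_chain_koszul_d koszul_d_koszul_d by blast+
  ultimately show ?thesis by blast
qed

theorem theorem3p5:
  fixes E :: "'v::finite \<Rightarrow> 'v \<Rightarrow> bool" and n :: nat
  assumes "n > 0" and "simple_graph E" and "gap_free E" and "claw_free n E"
  shows "cm_reg (edge_ideal E :: ('v, 'k::field) mpoly set) \<le> ereal (real n)"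
  unfolding cm_reg_def
proof (rule Sup_least)
  fix x assume "x \<in> {ereal (of_int (j - int i)) |i j. graded_betti (edge_ideal E :: ('v, 'k) mpoly set) i j \<noteq> 0}"
  then obtain i j where x: "x = ereal (of_int (j - int i))"
    and nonzero: "graded_betti (edge_ideal E :: ('v, 'k) mpoly set) i j \<noteq> 0"
    by blast
  have "j - int i \<le> int n"
  proof (rule ccontr)
    assume "\<not> j - int i \<le> int n"
    then have "{c \<in> koszul_chains (edge_ideal E :: ('v, 'k) mpoly set) i j. koszul_d c = (\<lambda>_. 0)}
        = koszul_d ` koszul_chains (edge_ideal E) (Suc i) j"
      using assms by (intro koszul_cycles_eq_boundaries) auto
    then have "graded_betti (edge_ideal E :: ('v, 'k) mpoly set) i j = 0"
      unfolding graded_betti_def by simp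
    then show False using nonzero by simp
  qed
  then show "x \<le> ereal (real n)" unfolding x by simp
qed

end
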